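(* For all integers $n$ and $\alpha$ with $n<\alpha\le 2^{n-2}+2$, there exists a minimal $n$-state nondeterministic finite automaton accepting an infix-free language whose equivalent minimal deterministic finite automaton has exactly $\alpha$ states.
   Context: NFAs have a single initial state and a transition function $\delta:Q\times\Sigma\to 2^Q$ that may map to the empty set (no sink state is needed or counted); DFAs are complete, so a sink state is counted. A minimal $n$-state NFA is an NFA with $n$ states such that no NFA with fewer states accepts the same language. A language $L\subseteq\Sigma^*$ is infix-free if $y\in L$ implies $xyz\notin L$ for all $x,z\in\Sigma^*$ with $xz\neq\lambda$ ($\lambda$ the empty word). *)

theory Defs
  imports Complex_Main
begin

record 'a nfa =
  nstates :: "nat set"
  ninit   :: nat
  nfinal  :: "nat set"
  ndelta  :: "nat \<Rightarrow> 'a \<Rightarrow> nat set"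

definition wf_nfa :: "'a set \<Rightarrow> 'a nfa \<Rightarrow> bool" where
  "wf_nfa \<Sigma> N \<longleftrightarrow> finite (nstates N) \<and> ninit N \<in> nstates N \<and> nfinal N \<subseteq> nstates N
     \<and> (\<forall>q\<in>nstates N. \<forall>a\<in>\<Sigma>. ndelta N q a \<subseteq> nstates N)"

fun nreach :: "'a nfa \<Rightarrow> nat set \<Rightarrow> 'a list \<Rightarrow> nat set" where
  "nreach N S [] = S"
| "nreach N S (a # w) = nreach N (\<Union>q\<in>S. ndelta N q a) w"

definition nfa_lang :: "'a set \<Rightarrow> 'a nfa \<Rightarrow> 'a list set" where
  "nfa_lang \<Sigma> N = {w \<in> lists \<Sigma>. nreach N {ninit N} w \<inter> nfinal N \<noteq> {}}"

definition minimal_nfa :: "'a set \<Rightarrow> 'a nfa \<Rightarrow> bool" where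
  "minimal_nfa \<Sigma> N \<longleftrightarrow> wf_nfa \<Sigma> N \<and>
     (\<forall>N'. wf_nfa \<Sigma> N' \<and> nfa_lang \<Sigma> N' = nfa_lang \<Sigma> N \<longrightarrow> card (nstates N) \<le> card (nstates N'))"

record 'a dfa =
  dstates :: "nat set"
  dinit   :: nat
  dfinal  :: "nat set"
  ddelta  :: "nat \<Rightarrow> 'a \<Rightarrow> nat"

text \<open>DFAs are complete (a sink state, if needed, is counted).\<close>
definition wf_dfa :: "'a set \<Rightarrow> 'a dfa \<Rightarrow> bool" where
  "wf_dfa \<Sigma> D \<longleftrightarrow> finite (dstates D) \<and> dinit D \<in> dstates D \<and> dfinal D \<subseteq> dstates D
     \<and> (\<forall>q\<in>dstates D. \<forall>a\<in>\<Sigma>. ddelta D q a \<in> dstates D)"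

fun dreach :: "'a dfa \<Rightarrow> nat \<Rightarrow> 'a list \<Rightarrow> nat" where
  "dreach D q [] = q"
| "dreach D q (a # w) = dreach D (ddelta D q a) w"

definition dfa_lang :: "'a set \<Rightarrow> 'a dfa \<Rightarrow> 'a list set" where
  "dfa_lang \<Sigma> D = {w \<in> lists \<Sigma>. dreach D (dinit D) w \<in> dfinal D}"

definition min_dfa_states :: "'a set \<Rightarrow> 'a list set \<Rightarrow> nat" where
  "min_dfa_states \<Sigma> L = (LEAST k. \<exists>D. wf_dfa \<Sigma> D \<and> dfa_lang \<Sigma> D = L \<and> card (dstates D) = k)"

definition infix_free :: "'a list set \<Rightarrow> bool" where
  "infix_free L \<longleftrightarrow> (\<forall>x y z. y \<in> L \<and> x @ y @ z \<in> L \<longrightarrow> x @ z = [])"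

end

theory Submission
  imports Defs
begin

text \<open>For \<open>n \<le> 2\<close> the language consisting of a single word of length \<open>n - 1\<close> does
  the job.  For \<open>n \<ge> 3\<close> let \<open>m = n - 2\<close> and choose \<open>k = \<alpha> - 3\<close> distinct nonempty subsets
  of \<open>{1..m}\<close> including all singletons, which is possible because \<open>m \<le> k < 2\<^sup>m\<close>.  The NFA
  has an initial state, a final state and \<open>m\<close> middle states; one letter enters the middle and
  leaves it, one letter per middle state \<open>i\<close> tests whether \<open>i\<close> is active, and one letter per
  chosen subset jumps from the first middle state to that subset.  Every accepted word is
  \<open>0 u 0\<close> with no \<open>0\<close> in \<open>u\<close>, hence the language is infix-free.  The reachable sets of the
  subset construction are \<open>\<emptyset>\<close>, the initial and the final singleton and the \<open>k\<close> chosen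
  subsets; the test letters separate them, so the minimal DFA has \<open>k + 3 = \<alpha>\<close> states.  Since
  every single state is reachable alone and has its own accepted suffix, the \<open>n\<close> states form a
  fooling set, so the NFA is minimal.\<close>

section \<open>Runs of NFAs and fooling sets\<close>

lemma nreach_append: "nreach N S (x @ y) = nreach N (nreach N S x) y"
  by (induction x arbitrary: S) auto

lemma nreach_UN: "nreach N S w = (\<Union>q\<in>S. nreach N {q} w)"
proof (induction w arbitrary: S)
  case Nil
  then show ?case by auto
next
  case (Cons a w)
  have "nreach N S (a # w) = (\<Union>p\<in>(\<Union>q\<in>S. ndelta N q a). nreach N {p} w)"
    by (simp only: nreach.simps) (rule Cons.IH)
  also have "\<dots> = (\<Union>q\<in>S. \<Union>p\<in>ndelta N q a. nreach N {p} w)"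
    by (rule UN_UN_flatten)
  also have "\<dots> = (\<Union>q\<in>S. nreach N (ndelta N q a) w)"
    by (intro SUP_cong refl) (rule Cons.IH[symmetric])
  finally show ?case
    by simp
qed

lemma nreach_subset_nstates:
  assumes "wf_nfa \<Sigma> N" "S \<subseteq> nstates N" "w \<in> lists \<Sigma>"
  shows "nreach N S w \<subseteq> nstates N"
  using assms(2,3)
proof (induction w arbitrary: S)
  case (Cons a w)
  have "a \<in> \<Sigma>"
    using Cons.prems(2) by simp
  then have "(\<Union>q\<in>S. ndelta N q a) \<subseteq> nstates N"
    using assms(1) Cons.prems(1) unfolding wf_nfa_def by blast
  then show ?case
    using Cons.IH Cons.prems(2) by simp
qed simp

lemma nreach_empty [simp]: "nreach N {} w = {}"
  by (induction w) auto
lemma in_nfa_lang_iff: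
  "w \<in> nfa_lang \<Sigma> N \<longleftrightarrow> w \<in> lists \<Sigma> \<and> nreach N {ninit N} w \<inter> nfinal N \<noteq> {}"
  by (simp add: nfa_lang_def)

lemma nfa_lang_subset_lists: "nfa_lang \<Sigma> N \<subseteq> lists \<Sigma>"
  by (auto simp: nfa_lang_def)

lemma in_nfa_lang_append_iff:
  assumes "x \<in> lists \<Sigma>" "y \<in> lists \<Sigma>"
  shows "x @ y \<in> nfa_lang \<Sigma> N \<longleftrightarrow>
    (\<exists>q\<in>nreach N {ninit N} x. nreach N {q} y \<inter> nfinal N \<noteq> {})"
proof -
  have "nreach N (nreach N {ninit N} x) y = (\<Union>q\<in>nreach N {ninit N} x. nreach N {q} y)"
    by (rule nreach_UN)
  then show ?thesis
    using assms by (auto simp: in_nfa_lang_iff nreach_append)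
qed

lemma card_fooling_set_le:
  assumes wf: "wf_nfa \<Sigma> N" and I: "finite I"
    and accept: "\<And>i. i \<in> I \<Longrightarrow> x i \<in> lists \<Sigma> \<and> x i @ y i \<in> nfa_lang \<Sigma> N"
    and fool: "\<And>i j. i \<in> I \<Longrightarrow> j \<in> I \<Longrightarrow> i \<noteq> j \<Longrightarrow>
                  x i @ y j \<notin> nfa_lang \<Sigma> N \<or> x j @ y i \<notin> nfa_lang \<Sigma> N"
  shows "card I \<le> card (nstates N)"
proof -
  have words: "x i \<in> lists \<Sigma>" "y i \<in> lists \<Sigma>" if "i \<in> I" for i
    using accept[OF that] nfa_lang_subset_lists[of \<Sigma> N] by auto
  have "\<forall>i\<in>I. \<exists>q\<in>nreach N {ninit N} (x i). nreach N {q} (y i) \<inter> nfinal N \<noteq> {}"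
    using accept words in_nfa_lang_append_iff by metis
  then obtain mid where mid: "\<forall>i\<in>I. mid i \<in> nreach N {ninit N} (x i) \<and>
      nreach N {mid i} (y i) \<inter> nfinal N \<noteq> {}"
    by metis
  have "inj_on mid I"
  proof (rule inj_onI, rule ccontr)
    fix i j assume ij: "i \<in> I" "j \<in> I" "mid i = mid j" "i \<noteq> j"
    then have "x i @ y j \<in> nfa_lang \<Sigma> N" "x j @ y i \<in> nfa_lang \<Sigma> N"
      using mid words by (metis in_nfa_lang_append_iff)+
    then show False
      using fool[OF ij(1,2,4)] by blast
  qed
  moreover have "mid ` I \<subseteq> nstates N"
  proof (rule image_subsetI)
    fix i assume "i \<in> I"
    have "{ninit N} \<subseteq> nstates N"
      using wf by (simp add: wf_nfa_def)
    then have "nreach N {ninit N} (x i) \<subseteq> nstates N"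
      using nreach_subset_nstates[OF wf] words(1)[OF \<open>i \<in> I\<close>] by blast
    then show "mid i \<in> nstates N"
      using mid \<open>i \<in> I\<close> by blast
  qed
  moreover have "finite (nstates N)"
    using wf by (simp add: wf_nfa_def)
  ultimately show ?thesis
    by (rule card_inj_on_le)
qed
section \<open>Left quotients and the minimal DFA\<close>

definition lquot :: "'a list set \<Rightarrow> 'a list \<Rightarrow> 'a list set" where
  "lquot L w = {z. w @ z \<in> L}"

lemma lquot_append: "lquot L (u @ v) = lquot (lquot L u) v"
  by (simp add: lquot_def)

lemma lquot_snoc_in_lquots:
  assumes "P \<in> lquot L ` lists \<Sigma>" "a \<in> \<Sigma>"
  shows "lquot P [a] \<in> lquot L ` lists \<Sigma>"
proof -
  obtain w where "w \<in> lists \<Sigma>" "P = lquot L w"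
    using assms(1) by blast
  then have "w @ [a] \<in> lists \<Sigma>" "lquot P [a] = lquot L (w @ [a])"
    using assms(2) by (simp_all add: lquot_append)
  then show ?thesis
    by blast
qed

lemma dreach_append: "dreach D q (x @ y) = dreach D (dreach D q x) y"
  by (induction x arbitrary: q) auto

lemma dreach_in_dstates:
  "wf_dfa \<Sigma> D \<Longrightarrow> q \<in> dstates D \<Longrightarrow> w \<in> lists \<Sigma> \<Longrightarrow> dreach D q w \<in> dstates D"
  by (induction w arbitrary: q) (auto simp: wf_dfa_def)

lemma card_lquots_le_dstates:
  assumes wf: "wf_dfa \<Sigma> D"
  shows "card (lquot (dfa_lang \<Sigma> D) ` lists \<Sigma>) \<le> card (dstates D)"
proof -
  define lang_at where "lang_at q = {z \<in> lists \<Sigma>. dreach D q z \<in> dfinal D}" for q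
  have "lquot (dfa_lang \<Sigma> D) w = lang_at (dreach D (dinit D) w)" if "w \<in> lists \<Sigma>" for w
    using that by (auto simp: lquot_def lang_at_def dfa_lang_def dreach_append)
  moreover have "dreach D (dinit D) w \<in> dstates D" if "w \<in> lists \<Sigma>" for w
    using dreach_in_dstates[OF wf _ that] wf by (simp add: wf_dfa_def)
  ultimately have "lquot (dfa_lang \<Sigma> D) ` lists \<Sigma> \<subseteq> lang_at ` dstates D"
    by auto
  moreover have fin: "finite (dstates D)"
    using wf by (simp add: wf_dfa_def)
  ultimately have "card (lquot (dfa_lang \<Sigma> D) ` lists \<Sigma>) \<le> card (lang_at ` dstates D)"
    by (simp add: card_mono)
  also have "\<dots> \<le> card (dstates D)"
    using fin by (rule card_image_le)
  finally show ?thesis .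
qed

lemma dreach_tracks_lquot:
  assumes step: "\<And>i a. i < c \<Longrightarrow> a \<in> \<Sigma> \<Longrightarrow> ddelta D i a < c \<and> h (ddelta D i a) = lquot (h i) [a]"
  shows "i < c \<Longrightarrow> w \<in> lists \<Sigma> \<Longrightarrow> dreach D i w < c \<and> h (dreach D i w) = lquot (h i) w"
proof (induction w arbitrary: i)
  case (Cons a w)
  then show ?case
    using Cons.IH[of "ddelta D i a"] step[of i a] by (simp add: lquot_append[symmetric])
qed (simp add: lquot_def)

lemma ex_dfa_of_lquots:
  assumes L: "L \<subseteq> lists \<Sigma>" and fin: "finite (lquot L ` lists \<Sigma>)"
  shows "\<exists>D. wf_dfa \<Sigma> D \<and> dfa_lang \<Sigma> D = L \<and> card (dstates D) = card (lquot L ` lists \<Sigma>)"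
proof -
  define Q where "Q = lquot L ` lists \<Sigma>"
  define c where "c = card Q"
  obtain h where h: "bij_betw h {0..<c} Q"
    using ex_bij_betw_nat_finite[of Q] fin unfolding Q_def c_def by auto
  define idx where "idx = the_inv_into {0..<c} h"
  have idx: "idx P < c" "h (idx P) = P" if "P \<in> Q" for P
    using that h the_inv_into_into[of h "{0..<c}" P "{0..<c}"] f_the_inv_into_f_bij_betw[OF h]
    unfolding idx_def bij_betw_def by auto
  have h_in_Q: "h i \<in> Q" if "i < c" for i
    using h that unfolding bij_betw_def by auto
  have step_in_Q: "lquot P [a] \<in> Q" if "P \<in> Q" "a \<in> \<Sigma>" for P a
    using that unfolding Q_def by (rule lquot_snoc_in_lquots)
  define D where "D = \<lparr>dstates = {0..<c}, dinit = idx (lquot L []),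
      dfinal = {i \<in> {0..<c}. [] \<in> h i}, ddelta = (\<lambda>i a. idx (lquot (h i) [a]))\<rparr>"
  have init: "lquot L [] \<in> Q"
    unfolding Q_def by auto
  have step: "ddelta D i a < c \<and> h (ddelta D i a) = lquot (h i) [a]"
    if "i < c" "a \<in> \<Sigma>" for i a
    using idx step_in_Q h_in_Q that by (simp add: D_def)
  have run: "dreach D i w < c \<and> h (dreach D i w) = lquot (h i) w"
    if "i < c" "w \<in> lists \<Sigma>" for i w
    using step that by (rule dreach_tracks_lquot)
  have "wf_dfa \<Sigma> D"
    using step idx(1)[OF init] by (auto simp: wf_dfa_def D_def)
  moreover have "dfa_lang \<Sigma> D = L"
  proof -
    have start: "dinit D < c" "h (dinit D) = L"
      using idx[OF init] by (simp_all add: D_def lquot_def)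
    have "w \<in> dfa_lang \<Sigma> D \<longleftrightarrow> w \<in> L" if "w \<in> lists \<Sigma>" for w
      using run[OF start(1) that] start(2) by (auto simp: dfa_lang_def D_def lquot_def that)
    then show ?thesis
      using L by (auto simp: dfa_lang_def)
  qed
  moreover have "card (dstates D) = card Q"
    by (simp add: D_def c_def)
  ultimately show ?thesis
    unfolding Q_def by blast
qed

lemma min_dfa_states_eq_card_lquots:
  assumes "L \<subseteq> lists \<Sigma>" "finite (lquot L ` lists \<Sigma>)"
  shows "min_dfa_states \<Sigma> L = card (lquot L ` lists \<Sigma>)"
  unfolding min_dfa_states_def
proof (rule Least_equality)
  show "\<exists>D. wf_dfa \<Sigma> D \<and> dfa_lang \<Sigma> D = L \<and> card (dstates D) = card (lquot L ` lists \<Sigma>)"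
    by (rule ex_dfa_of_lquots[OF assms])
next
  fix k assume "\<exists>D. wf_dfa \<Sigma> D \<and> dfa_lang \<Sigma> D = L \<and> card (dstates D) = k"
  then obtain D where "wf_dfa \<Sigma> D" "dfa_lang \<Sigma> D = L" "card (dstates D) = k"
    by blast
  then show "card (lquot L ` lists \<Sigma>) \<le> k"
    using card_lquots_le_dstates by metis
qed

lemma lquot_nfa_lang:
  "w \<in> lists \<Sigma> \<Longrightarrow>
     lquot (nfa_lang \<Sigma> N) w = {z \<in> lists \<Sigma>. nreach N (nreach N {ninit N} w) z \<inter> nfinal N \<noteq> {}}"
  by (auto simp: lquot_def nfa_lang_def nreach_append)

section \<open>Infix-free languages\<close>

lemma infix_free_singleton: "infix_free {w}"
  unfolding infix_free_def
proof (intro allI impI)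
  fix x y z assume "y \<in> {w} \<and> x @ y @ z \<in> {w}"
  then have "x @ y @ z = y"
    by blast
  then have "length (x @ y @ z) = length y"
    by (rule arg_cong)
  then show "x @ z = []"
    by simp
qed

lemma infix_free_if_delimited:
  assumes delim: "\<And>w. w \<in> L \<Longrightarrow> \<exists>u. w = c # u @ [c] \<and> c \<notin> set u"
  shows "infix_free L"
  unfolding infix_free_def
proof (intro allI impI)
  fix x y z assume "y \<in> L \<and> x @ y @ z \<in> L"
  then obtain u v where y: "y = c # u @ [c]" "c \<notin> set u"
    and xyz: "x @ y @ z = c # v @ [c]" "c \<notin> set v"
    using delim by meson
  have "count_list (x @ y @ z) c = 2"
    using xyz by simp
  moreover have "count_list y c = 2"
    using y by simp
  ultimately have "count_list x c = 0" "count_list z c = 0"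
    by simp_all
  then have no_c: "c \<notin> set x" "c \<notin> set z"
    by (simp_all add: count_list_0_iff)
  have "x = []"
  proof (rule ccontr)
    assume "x \<noteq> []"
    then have "hd x = c"
      using xyz(1) by (cases x) auto
    then show False
      using \<open>x \<noteq> []\<close> no_c(1) hd_in_set by metis
  qed
  moreover have "z = []"
  proof (rule ccontr)
    assume "z \<noteq> []"
    then have "last z = c"
      using xyz(1) by (cases z rule: rev_cases) auto
    then show False
      using \<open>z \<noteq> []\<close> no_c(2) last_in_set by metis
  qed
  ultimately show "x @ z = []"
    by simp
qed

section \<open>Languages of a single word\<close>

lemma in_lists_singleton_iff: "w \<in> lists {c} \<longleftrightarrow> w = replicate (length w) c"
proof
  assume "w \<in> lists {c}"
  then show "w = replicate (length w) c"
    by (intro replicate_length_same[symmetric]) auto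
next
  assume "w = replicate (length w) c"
  then show "w \<in> lists {c}"
    by (metis replicate_in_lists singletonI)
qed

definition chain_nfa :: "nat \<Rightarrow> 'a nfa" where
  "chain_nfa l = \<lparr>nstates = {0..l}, ninit = 0, nfinal = {l},
     ndelta = (\<lambda>q a. if q < l then {Suc q} else {})\<rparr>"

lemma chain_nfa_simps [simp]:
  "nstates (chain_nfa l) = {0..l}" "ninit (chain_nfa l) = 0" "nfinal (chain_nfa l) = {l}"
  by (simp_all add: chain_nfa_def)
lemma nreach_chain_nfa:
  "q \<le> l \<Longrightarrow> nreach (chain_nfa l) {q} w = (if q + length w \<le> l then {q + length w} else {})"
proof (induction w arbitrary: q)
  case (Cons a w)
  show ?case
  proof (cases "q < l")
    case True
    then show ?thesis
      using Cons.IH[of "Suc q"] by (simp add: chain_nfa_def)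
  next
    case False
    then show ?thesis
      using Cons.prems by (simp add: chain_nfa_def)
  qed
qed simp

lemma wf_chain_nfa: "wf_nfa \<Sigma> (chain_nfa l)"
  by (auto simp: wf_nfa_def chain_nfa_def)

lemma nfa_lang_chain_nfa: "nfa_lang {c} (chain_nfa l) = {replicate l c}"
proof -
  have "w \<in> nfa_lang {c} (chain_nfa l) \<longleftrightarrow> w \<in> lists {c} \<and> length w = l" for w
    by (auto simp: in_nfa_lang_iff nreach_chain_nfa)
  moreover have "w \<in> lists {c} \<and> length w = l \<longleftrightarrow> w = replicate l c" for w
    by (metis in_lists_singleton_iff length_replicate)
  ultimately show ?thesis
    by blast
qed

lemma minimal_nfa_chain_nfa: "minimal_nfa {c} (chain_nfa l)"
  unfolding minimal_nfa_def
proof (intro conjI allI impI)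
  fix N :: "'a nfa" assume N: "wf_nfa {c} N \<and> nfa_lang {c} N = nfa_lang {c} (chain_nfa l)"
  have "card {0..l} \<le> card (nstates N)"
  proof (rule card_fooling_set_le[where x = "\<lambda>i. replicate i c" and y = "\<lambda>i. replicate (l - i) c"])
    fix i assume "i \<in> {0..l}"
    then show "replicate i c \<in> lists {c} \<and> replicate i c @ replicate (l - i) c \<in> nfa_lang {c} N"
      using N by (simp add: nfa_lang_chain_nfa replicate_in_lists replicate_add[symmetric])
  next
    fix i j assume "i \<in> {0..l}" "j \<in> {0..l}" "i \<noteq> j"
    then show "replicate i c @ replicate (l - j) c \<notin> nfa_lang {c} N \<or>
        replicate j c @ replicate (l - i) c \<notin> nfa_lang {c} N"
      using N by (simp add: nfa_lang_chain_nfa replicate_add[symmetric])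
  qed (use N in simp_all)
  then show "card (nstates (chain_nfa l)) \<le> card (nstates N)"
    by simp
qed (rule wf_chain_nfa)

lemma lquot_replicate:
  assumes "w \<in> lists {c}"
  shows "lquot {replicate l c} w = (if length w \<le> l then {replicate (l - length w) c} else {})"
proof -
  have "w @ z = replicate l c \<longleftrightarrow> length w \<le> l \<and> z = replicate (l - length w) c" for z
    using assms by (metis append_eq_conv_conj drop_replicate in_lists_singleton_iff le_add1
        length_append length_drop length_replicate replicate_add take_replicate min.absorb1)
  then show ?thesis
    by (auto simp: lquot_def)
qed

lemma min_dfa_states_replicate: "min_dfa_states {c} {replicate l c} = l + 2"
proof -
  have "lquot {replicate l c} ` lists {c} = insert {} ((\<lambda>j. {replicate j c}) ` {0..l})"
  proof (intro equalityI subsetI)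
    fix P assume "P \<in> lquot {replicate l c} ` lists {c}"
    then show "P \<in> insert {} ((\<lambda>j. {replicate j c}) ` {0..l})"
      by (auto simp: lquot_replicate)
  next
    fix P assume "P \<in> insert {} ((\<lambda>j. {replicate j c}) ` {0..l})"
    then consider "P = lquot {replicate l c} (replicate (Suc l) c)"
      | j where "j \<le> l" "P = lquot {replicate l c} (replicate (l - j) c)"
      by (auto simp: lquot_replicate replicate_in_lists)
    then show "P \<in> lquot {replicate l c} ` lists {c}"
      by cases (auto intro: replicate_in_lists)
  qed
  moreover have "card (insert {} ((\<lambda>j. {replicate j c}) ` {0..l})) = l + 2"
  proof -
    have "inj_on (\<lambda>j. {replicate j c}) {0..l}"
      by (rule inj_onI) simp
    then have "card ((\<lambda>j. {replicate j c}) ` {0..l}) = Suc l"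
      by (simp add: card_image)
    moreover have "{} \<notin> (\<lambda>j. {replicate j c}) ` {0..l}"
      by blast
    ultimately show ?thesis
      by simp
  qed
  ultimately show ?thesis
    by (simp add: min_dfa_states_eq_card_lquots replicate_in_lists)
qed

section \<open>The construction for \<open>n \<ge> 3\<close>\<close>

locale subset_family_nfa =
  fixes m k :: nat and g :: "nat \<Rightarrow> nat set"
  assumes m_pos: "1 \<le> m"
    and family_subset: "j < k \<Longrightarrow> g j \<subseteq> {1..m}"
    and family_nonempty: "j < k \<Longrightarrow> g j \<noteq> {}"
    and family_singletons: "i \<in> {1..m} \<Longrightarrow> \<exists>j<k. g j = {i}"
    and family_inj: "inj_on g {0..<k}"
begin

definition alphabet :: "nat set" where
  "alphabet = {0..m + k}"

text \<open>Letter \<open>0\<close> leads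
  \<open>0 \<rightarrow> 1 \<rightarrow> Suc m\<close>; letter \<open>i \<in> {1..m}\<close> leads from \<open>i\<close> back to \<open>1\<close> (it tests
  membership of \<open>i\<close>); letter \<open>Suc m + j\<close> leads from \<open>1\<close> to every state of \<open>g j\<close>.\<close>

definition delta :: "nat \<Rightarrow> nat \<Rightarrow> nat set" where
  "delta q a =
     (if q = 0 then (if a = 0 then {1} else {})
      else if q \<le> m then
        (if a = 0 then (if q = 1 then {Suc m} else {})
         else if a \<le> m then (if a = q then {1} else {})
         else if q = 1 \<and> a - Suc m < k then g (a - Suc m) else {})
      else {})"

definition aut :: "nat nfa" where
  "aut = \<lparr>nstates = {0..Suc m}, ninit = 0, nfinal = {Suc m}, ndelta = delta\<rparr>"

lemma alphabet_finite_nonempty: "finite alphabet" "alphabet \<noteq> {}"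
  by (auto simp: alphabet_def)

lemma aut_simps [simp]:
  "nstates aut = {0..Suc m}" "ninit aut = 0" "nfinal aut = {Suc m}" "ndelta aut = delta"
  by (simp_all add: aut_def)

lemma delta_subset_states: "delta q a \<subseteq> {0..Suc m}"
proof -
  have "g j \<subseteq> {0..Suc m}" if "j < k" for j
    using family_subset[OF that] by auto
  then show ?thesis
    by (simp add: delta_def)
qed

lemma card_nstates_aut: "card (nstates aut) = m + 2"
  by simp

lemma wf_aut: "wf_nfa alphabet aut"
  using delta_subset_states by (simp add: wf_nfa_def)

lemma step_from_middle:
  assumes "S \<subseteq> {1..m}"
  shows "(\<Union>q\<in>S. delta q a) =
    (if a = 0 then (if 1 \<in> S then {Suc m} else {})
     else if a \<le> m then (if a \<in> S then {1} else {})
     else if 1 \<in> S \<and> a - Suc m < k then g (a - Suc m) else {})"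
  using assms by (auto simp: delta_def subset_iff split: if_splits)

definition family :: "nat set set" where
  "family = g ` {0..<k}"

lemma family_subset_middle: "S \<in> family \<Longrightarrow> S \<subseteq> {1..m}"
  unfolding family_def using family_subset by (elim imageE) simp

lemma singleton_in_family: "i \<in> {1..m} \<Longrightarrow> {i} \<in> family"
  unfolding family_def using family_singletons by (metis atLeastLessThan_iff imageI zero_le)

definition reach_sets :: "nat set set" where
  "reach_sets = {{}, {0}, {Suc m}} \<union> family"

lemma step_in_reach_sets:
  assumes "S \<in> reach_sets"
  shows "(\<Union>q\<in>S. delta q a) \<in> reach_sets"
proof -
  have one: "{1} \<in> family"
    using singleton_in_family m_pos by simp
  consider "S = {}" | "S = {0}" | "S = {Suc m}" | "S \<in> family"
    using assms unfolding reach_sets_def by auto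
  then show ?thesis
  proof cases
    case 4
    have "a - Suc m < k \<Longrightarrow> g (a - Suc m) \<in> family"
      by (simp add: family_def)
    then show ?thesis
      unfolding step_from_middle[OF family_subset_middle[OF 4]] using one
      by (simp add: reach_sets_def)
  next
    case 2
    then show ?thesis
      using one by (cases "a = 0") (simp_all add: reach_sets_def delta_def)
  qed (simp_all add: reach_sets_def delta_def)
qed

lemma nreach_in_reach_sets: "S \<in> reach_sets \<Longrightarrow> nreach aut S w \<in> reach_sets"
  by (induction w arbitrary: S) (simp_all add: step_in_reach_sets)

lemma nreach_init_image: "(\<lambda>w. nreach aut {0} w) ` lists alphabet = reach_sets"
proof
  show "(\<lambda>w. nreach aut {0} w) ` lists alphabet \<subseteq> reach_sets"
    by (intro image_subsetI nreach_in_reach_sets) (simp add: reach_sets_def)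
next
  show "reach_sets \<subseteq> (\<lambda>w. nreach aut {0} w) ` lists alphabet"
  proof
    fix R assume "R \<in> reach_sets"
    then consider "R = {}" | "R = {0}" | "R = {Suc m}" | j where "j < k" "R = g j"
      by (auto simp: reach_sets_def family_def)
    then show "R \<in> (\<lambda>w. nreach aut {0} w) ` lists alphabet"
    proof cases
      case 1
      then show ?thesis
        using m_pos by (intro image_eqI[where x = "[1]"]) (simp_all add: delta_def alphabet_def)
    next
      case 2
      then show ?thesis
        by (intro image_eqI[where x = "[]"]) simp_all
    next
      case 3
      then show ?thesis
        using m_pos by (intro image_eqI[where x = "[0, 0]"]) (simp_all add: delta_def alphabet_def)
    next
      case (4 j)
      then show ?thesis
        using m_pos by (intro image_eqI[where x = "[0, Suc m + j]"])
          (simp_all add: delta_def alphabet_def)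
    qed
  qed
qed


definition lang_from :: "nat set \<Rightarrow> nat list set" where
  "lang_from R = {z \<in> lists alphabet. nreach aut R z \<inter> {Suc m} \<noteq> {}}"

text \<open>A reachable set is determined by which of the words \<open>[]\<close>, \<open>[0, 0]\<close> and \<open>[i, 0]\<close>
  it accepts.\<close>

definition decode :: "nat list set \<Rightarrow> nat set" where
  "decode A = (if [] \<in> A then {Suc m} else if [0, 0] \<in> A then {0}
     else {i \<in> {1..m}. [i, 0] \<in> A})"

lemma decode_lang_from:
  assumes "R \<in> reach_sets"
  shows "decode (lang_from R) = R"
proof -
  have "[0, 0] \<in> lists alphabet"
    by (simp add: alphabet_def)
  consider "R = {}" | "R = {0}" | "R = {Suc m}" | "R \<in> family"
    using assms unfolding reach_sets_def by auto
  then show ?thesis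
  proof cases
    case 4
    have middle: "R \<subseteq> {1..m}"
      using family_subset_middle[OF 4] .
    have test: "[i, 0] \<in> lang_from R \<longleftrightarrow> i \<in> R" if "i \<in> {1..m}" for i
    proof -
      have "nreach aut R [i, 0] = (if i \<in> R then {Suc m} else {})"
        using step_from_middle[OF middle, of i] that m_pos by (simp add: delta_def)
      then show ?thesis
        using that by (simp add: lang_from_def alphabet_def)
    qed
    have "nreach aut R [0, 0] = {}"
      using step_from_middle[OF middle, of 0] by (simp add: delta_def)
    then have "[0, 0] \<notin> lang_from R"
      by (simp add: lang_from_def)
    moreover have "{i \<in> {1..m}. [i, 0] \<in> lang_from R} = R"
      using test middle by blast
    moreover have "[] \<notin> lang_from R"
      using middle by (auto simp: lang_from_def)
    ultimately show ?thesis
      by (simp add: decode_def)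
  qed (use \<open>[0, 0] \<in> lists alphabet\<close> m_pos in \<open>simp_all add: decode_def lang_from_def delta_def\<close>)
qed

lemma card_reach_sets: "card reach_sets = k + 3"
proof -
  have "card family = k"
    using family_inj by (simp add: family_def card_image)
  moreover have "{} \<notin> family"
    unfolding family_def using family_nonempty by (metis atLeastLessThan_iff imageE)
  moreover have "{0} \<notin> family" "{Suc m} \<notin> family"
    using family_subset_middle[of "{0}"] family_subset_middle[of "{Suc m}"] by auto
  moreover have "reach_sets = insert {} (insert {0} (insert {Suc m} family))"
    by (auto simp: reach_sets_def)
  ultimately show ?thesis
    by (simp add: family_def)
qed

lemma lquots_aut: "lquot (nfa_lang alphabet aut) ` lists alphabet = lang_from ` reach_sets"
proof -
  have "lquot (nfa_lang alphabet aut) w = lang_from (nreach aut {0} w)" if "w \<in> lists alphabet" for w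
    using lquot_nfa_lang[OF that, of aut] by (simp add: lang_from_def)
  then have "lquot (nfa_lang alphabet aut) ` lists alphabet =
      lang_from ` (\<lambda>w. nreach aut {0} w) ` lists alphabet"
    by (simp add: image_image)
  then show ?thesis
    by (simp only: nreach_init_image)
qed

lemma min_dfa_states_aut: "min_dfa_states alphabet (nfa_lang alphabet aut) = k + 3"
proof -
  have "finite reach_sets"
    by (simp add: reach_sets_def family_def)
  have "inj_on lang_from reach_sets"
    using decode_lang_from by (rule inj_on_inverseI)
  have "min_dfa_states alphabet (nfa_lang alphabet aut) =
      card (lquot (nfa_lang alphabet aut) ` lists alphabet)"
    using \<open>finite reach_sets\<close> by (intro min_dfa_states_eq_card_lquots nfa_lang_subset_lists)
      (simp add: lquots_aut)
  also have "\<dots> = card (lang_from ` reach_sets)"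
    by (simp only: lquots_aut)
  also have "\<dots> = k + 3"
    using \<open>inj_on lang_from reach_sets\<close> by (simp add: card_image card_reach_sets)
  finally show ?thesis .
qed


lemma delta_middle_subset: "q \<in> {1..m} \<Longrightarrow> a \<noteq> 0 \<Longrightarrow> delta q a \<subseteq> {1..m}"
  using m_pos family_subset[of "a - Suc m"] by (simp add: delta_def)

lemma accepting_run_shape:
  "Suc m \<in> nreach aut {q} w \<Longrightarrow>
     (q = Suc m \<and> w = []) \<or> (q \<in> {1..m} \<and> (\<exists>u. w = u @ [0] \<and> 0 \<notin> set u)) \<or>
     (q = 0 \<and> (\<exists>u. w = 0 # u @ [0] \<and> 0 \<notin> set u))"
proof (induction w arbitrary: q)
  case (Cons a w)
  obtain p where p: "p \<in> delta q a" "Suc m \<in> nreach aut {p} w"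
    using Cons.prems nreach_UN[of aut "delta q a" w] by auto
  note IH = Cons.IH[OF p(2)]
  consider "q = 0" | "q \<in> {1..m}" | "m < q"
    by force
  then show ?case
  proof cases
    case 1
    then have "a = 0" "p = 1"
      using p(1) by (auto simp: delta_def split: if_splits)
    then show ?thesis
      using IH 1 m_pos by auto
  next
    case 2
    show ?thesis
    proof (cases "a = 0")
      case True
      then have "p = Suc m"
        using p(1) 2 by (auto simp: delta_def split: if_splits)
      then show ?thesis
        using IH 2 True m_pos by auto
    next
      case False
      then have "p \<in> {1..m}"
        using p(1) 2 delta_middle_subset by blast
      then obtain u where "w = u @ [0]" "0 \<notin> set u"
        using IH by auto
      then show ?thesis
        using 2 False by (intro disjI2 disjI1) (auto intro!: exI[of _ "a # u"])
    qed
  next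
    case 3
    then show ?thesis
      using p(1) by (simp add: delta_def)
  qed
qed simp

lemma infix_free_aut: "infix_free (nfa_lang alphabet aut)"
proof (rule infix_free_if_delimited)
  fix w assume "w \<in> nfa_lang alphabet aut"
  then have "Suc m \<in> nreach aut {0} w"
    by (simp add: in_nfa_lang_iff)
  then show "\<exists>u. w = 0 # u @ [0] \<and> 0 \<notin> set u"
    using accepting_run_shape by auto
qed

definition prefix :: "nat \<Rightarrow> nat list" where
  "prefix i = (if i = 0 then [] else if i = Suc m then [0, 0]
     else [0, Suc m + (SOME j. j < k \<and> g j = {i})])"

definition suffix :: "nat \<Rightarrow> nat list" where
  "suffix i = (if i = 0 then [0, 0] else if i = Suc m then [] else [i, 0])"

lemma prefix_in_lists: "i \<in> {0..Suc m} \<Longrightarrow> prefix i \<in> lists alphabet"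
  using family_singletons[of i] someI_ex[OF family_singletons[of i]]
  by (auto simp: prefix_def alphabet_def)

lemma suffix_in_lists: "i \<in> {0..Suc m} \<Longrightarrow> suffix i \<in> lists alphabet"
  by (auto simp: suffix_def alphabet_def)

lemma nreach_prefix: "i \<in> {0..Suc m} \<Longrightarrow> nreach aut {0} (prefix i) = {i}"
  using m_pos someI_ex[OF family_singletons[of i]]
  by (auto simp: prefix_def delta_def)

lemma accepts_suffix_iff:
  "i \<in> {0..Suc m} \<Longrightarrow> j \<in> {0..Suc m} \<Longrightarrow> Suc m \<in> nreach aut {i} (suffix j) \<longleftrightarrow> i = j"
  using m_pos by (auto simp: suffix_def delta_def)

lemma minimal_nfa_aut: "minimal_nfa alphabet aut"
  unfolding minimal_nfa_def
proof (intro conjI allI impI)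
  fix N :: "nat nfa" assume N: "wf_nfa alphabet N \<and> nfa_lang alphabet N = nfa_lang alphabet aut"
  have concat_iff: "prefix i @ suffix j \<in> nfa_lang alphabet N \<longleftrightarrow> i = j"
    if "i \<in> {0..Suc m}" "j \<in> {0..Suc m}" for i j
    using N prefix_in_lists[OF that(1)] suffix_in_lists[OF that(2)]
    by (simp add: in_nfa_lang_iff nreach_append nreach_prefix[OF that(1)] accepts_suffix_iff[OF that])
  have "card {0..Suc m} \<le> card (nstates N)"
  proof (rule card_fooling_set_le[where x = prefix and y = suffix])
    show "wf_nfa alphabet N"
      using N by simp
  qed (simp_all add: concat_iff prefix_in_lists)
  then show "card (nstates aut) \<le> card (nstates N)"
    by simp
qed (rule wf_aut)

end

lemma ex_subset_family_nfa:
  assumes "1 \<le> m" "m \<le> k" "k < 2 ^ m"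
  shows "\<exists>g. subset_family_nfa m k g"
proof -
  define singletons where "singletons = (\<lambda>i. {i}) ` {1..m}"
  define nonempty where "nonempty = Pow {1..m} - {{}}"
  have "card singletons = m"
    by (simp add: singletons_def card_image)
  moreover have "card nonempty = 2 ^ m - 1"
    by (simp add: nonempty_def card_Pow)
  moreover have "singletons \<subseteq> nonempty"
    by (auto simp: singletons_def nonempty_def)
  ultimately have "k - m \<le> card (nonempty - singletons)"
    using assms by (simp add: card_Diff_subset finite_subset singletons_def)
  then obtain extra where extra: "extra \<subseteq> nonempty - singletons" "card extra = k - m" "finite extra"
    by (rule obtain_subset_with_card_n)
  define F where "F = singletons \<union> extra"
  have "singletons \<inter> extra = {}"
    using extra(1) by blast
  then have "card F = k"
    using \<open>card singletons = m\<close> extra(2,3) assms(2)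
    by (simp add: F_def card_Un_disjoint singletons_def)
  then obtain g where g: "bij_betw g {0..<k} F"
    using ex_bij_betw_nat_finite[of F] extra(3) by (auto simp: F_def singletons_def)
  have "F \<subseteq> nonempty"
    using \<open>singletons \<subseteq> nonempty\<close> extra(1) by (auto simp: F_def)
  then have g_nonempty: "g j \<in> nonempty" if "j < k" for j
    using g that by (auto simp: bij_betw_def)
  show ?thesis
  proof (intro exI[of _ g] subset_family_nfa.intro)
    show "\<exists>j<k. g j = {i}" if "i \<in> {1..m}" for i
    proof -
      have "{i} \<in> g ` {0..<k}"
        using g that by (auto simp: bij_betw_def F_def singletons_def)
      then show ?thesis
        by auto
    qed
  qed (use assms g g_nonempty in \<open>auto simp: bij_betw_def nonempty_def\<close>)
qed

lemma le_of_powr_bound_small: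
  assumes "real \<alpha> \<le> 2 powr (real n - 2) + 2" "n \<in> {1, 2}"
  shows "\<alpha> \<le> n + 1"
proof -
  have "2 powr (real n - 2) < real n"
    using assms(2) by (auto simp: powr_minus)
  then show ?thesis
    using assms(1) by linarith
qed

lemma le_of_powr_bound:
  assumes "real \<alpha> \<le> 2 powr (real n - 2) + 2" "2 \<le> n"
  shows "\<alpha> \<le> 2 ^ (n - 2) + 2"
proof -
  have "2 powr (real n - 2) = 2 ^ (n - 2)"
    using assms(2) by (simp add: powr_realpow[symmetric] of_nat_diff)
  then have "real \<alpha> \<le> real (2 ^ (n - 2) + 2)"
    using assms(1) by simp
  then show ?thesis
    by (simp only: of_nat_le_iff)
qed

theorem mainTheorem6:
  fixes n \<alpha> :: nat
  assumes "1 \<le> n" and "n < \<alpha>" and "real \<alpha> \<le> 2 powr (real n - 2) + 2"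
  shows "\<exists>(\<Sigma>::nat set) (N::nat nfa). finite \<Sigma> \<and> \<Sigma> \<noteq> {} \<and>
           minimal_nfa \<Sigma> N \<and> card (nstates N) = n \<and>
           infix_free (nfa_lang \<Sigma> N) \<and>
           min_dfa_states \<Sigma> (nfa_lang \<Sigma> N) = \<alpha>"
proof (cases "n \<le> 2")
  case True
  then have "\<alpha> = n - 1 + 2"
    using assms le_of_powr_bound_small[of \<alpha> n] by force
  then show ?thesis
    using assms(1) minimal_nfa_chain_nfa[of 0 "n - 1"] min_dfa_states_replicate[of 0 "n - 1"]
    by (intro exI[of _ "{0}"] exI[of _ "chain_nfa (n - 1)"])
      (simp add: nfa_lang_chain_nfa infix_free_singleton)
next
  case False
  have "0 < (2::nat) ^ (n - 2)"
    by simp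
  then have "\<alpha> - 3 < 2 ^ (n - 2)" "1 \<le> n - 2" "n - 2 \<le> \<alpha> - 3"
    using False assms(2) le_of_powr_bound[OF assms(3)] by linarith+
  then obtain g where g: "subset_family_nfa (n - 2) (\<alpha> - 3) g"
    using ex_subset_family_nfa by blast
  have "n - 2 + 2 = n" "\<alpha> - 3 + 3 = \<alpha>"
    using False assms(2) by linarith+
  then show ?thesis
    using subset_family_nfa.alphabet_finite_nonempty[OF g] subset_family_nfa.card_nstates_aut[OF g]
      subset_family_nfa.minimal_nfa_aut[OF g] subset_family_nfa.infix_free_aut[OF g]
      subset_family_nfa.min_dfa_states_aut[OF g]
    by metis
qed

end
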